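(* Let $\mu$ be a finite positive Borel measure on $\mathbb{R}^d$, $H$ an open set, $0<\tau\le1$, and $\mathcal{D}_1,\mathcal{D}_2$ two dyadic lattices with transit cubes $\mathcal{D}_1^{tr},\mathcal{D}_2^{tr}$. For each $R\in\mathcal{D}_2$ let $R_1$ be a designated one of its $2^d$ dyadic children (chosen by a fixed rule). For $Q\in\mathcal{D}_1^{tr}$, $R\in\mathcal{D}_2^{tr}$ with $Q\subset R_1$ put $T_{Q,R}=\big[\frac{\ell(Q)}{\ell(R)}\big]^{\tau/2}\sqrt{\frac{\mu(Q)}{\mu(R_1)}}$. Then for any nonnegative families $\{a_Q\}_{Q\in\mathcal{D}_1^{tr}}$, $\{b_R\}_{R\in\mathcal{D}_2^{tr}}$, $$\sum_{Q,R:\,Q\subset R_1}T_{Q,R}a_Qb_R\le\frac{1}{1-2^{-\tau/2}}\Big[\sum_Qa_Q^2\Big]^{1/2}\Big[\sum_Rb_R^2\Big]^{1/2}.$$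
   Context: A dyadic lattice is the collection of dyadic subcubes of a (shifted) unit cube. A dyadic cube $Q$ is terminal if $2Q\subset H$ or $\mu(Q)=0$, and transit otherwise (so $\mu(R_1)\ge\mu(Q)>0$ for transit $Q\subset R_1$). $\ell(\cdot)$ is side length. *)

theory Defs
  imports "HOL-Analysis.Analysis"
begin

definition hcube :: "real^'n \<Rightarrow> real \<Rightarrow> (real^'n) set" where
  "hcube c l = {x. \<forall>i. c$i \<le> x$i \<and> x$i < c$i + l}"

definition dyadic_lattice :: "real^'n \<Rightarrow> (real^'n) set set" where
  "dyadic_lattice z = {hcube (z + (2 powr - real k) *\<^sub>R (\<chi> i. real_of_int (j$i))) (2 powr - real k)
       | k j. \<forall>i. 0 \<le> j$i \<and> j$i < 2 ^ k}"

definition side_len :: "(real^'n) set \<Rightarrow> real" where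
  "side_len Q = (THE l. \<exists>c. 0 < l \<and> Q = hcube c l)"

definition double_cube :: "(real^'n) set \<Rightarrow> (real^'n) set" where
  "double_cube Q = (THE P. \<exists>c l. 0 < l \<and> Q = hcube c l \<and> P = hcube (c - (l/2) *\<^sub>R (\<chi> i. 1)) (2*l))"

definition dyadic_children :: "(real^'n) set \<Rightarrow> (real^'n) set set" where
  "dyadic_children R = {Q. \<exists>c l e. 0 < l \<and> R = hcube c l \<and> (\<forall>i. e$i \<in> {0::real,1})
        \<and> Q = hcube (c + (l/2) *\<^sub>R e) (l/2)}"

definition transit_cubes :: "(real^'n) measure \<Rightarrow> (real^'n) set \<Rightarrow> (real^'n) set set \<Rightarrow> (real^'n) set set" where
  "transit_cubes \<mu> H D = {Q \<in> D. \<not> (double_cube Q \<subseteq> H \<or> measure \<mu> Q = 0)}"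

definition ennsqrt :: "ennreal \<Rightarrow> ennreal" where
  "ennsqrt x = (if x = \<infinity> then \<infinity> else ennreal (sqrt (enn2real x)))"

end

(* With w(Q,R) = (l(Q)/l(R))^(tau/2) and m(Q,R) = mu(Q)/mu(R_1) the kernel is T = w sqrt m, and
   Cauchy-Schwarz in the form  w sqrt m a b = (sqrt w a) (sqrt (w m) b)  reduces the bound (Schur test)
   to two estimates by 1/(1 - 2^(-tau/2)): every row sum, over R, of w(Q,R), and every column sum,
   over Q, of w(Q,R) m(Q,R).  Both are geometric series in the level difference.  The cubes R with
   Q inside R_1 all contain a point of Q, so they have pairwise different levels; and the cubes
   Q inside R_1 of one fixed level are pairwise disjoint, so their masses add up to at most mu(R_1). *)

theory Submission
  imports Defs
begin

lemma lower_corner_in_hcube: "0 < l \<Longrightarrow> c \<in> hcube c l"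
  by (simp add: hcube_def)

lemma hcube_side_le_if_subset:
  assumes "0 < l" and "hcube c l \<subseteq> hcube c' l'"
  shows "l \<le> l'"
proof (rule ccontr)
  assume "\<not> l \<le> l'"
  fix i
  have "c \<in> hcube c' l'"
    using assms lower_corner_in_hcube by blast
  then have "c' $ i \<le> c $ i" "0 < l'"
    by (auto simp: hcube_def)
  moreover have "c + l' *\<^sub>R (\<chi> i. 1) \<in> hcube c l"
    using \<open>\<not> l \<le> l'\<close> \<open>0 < l'\<close> by (simp add: hcube_def)
  then have "c + l' *\<^sub>R (\<chi> i. 1) \<in> hcube c' l'"
    using assms(2) by blast
  then have "c $ i + l' < c' $ i + l'"
    by (simp add: hcube_def)
  ultimately show False by simp
qed

lemma side_len_hcube: "0 < l \<Longrightarrow> side_len (hcube c l) = l"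
  unfolding side_len_def
  by (rule the_equality) (auto intro: antisym hcube_side_le_if_subset)

lemma hcube_in_sets_borel: "hcube c l \<in> sets borel"
  unfolding hcube_def by measurable

lemma dyadic_latticeE:
  assumes "Q \<in> dyadic_lattice z"
  obtains k j where "Q = hcube (z + (2 powr - real k) *\<^sub>R (\<chi> i. real_of_int (j $ i))) (2 powr - real k)"
  using assms unfolding dyadic_lattice_def by blast

lemma dyadic_lattice_hcube:
  assumes "Q \<in> dyadic_lattice z"
  obtains c l where "0 < l" "Q = hcube c l"
  using assms by (elim dyadic_latticeE) (erule that[rotated], simp)

lemma dyadic_lattice_nonempty: "Q \<in> dyadic_lattice z \<Longrightarrow> Q \<noteq> {}"
  by (elim dyadic_lattice_hcube) (auto dest: lower_corner_in_hcube)

lemma dyadic_lattice_in_sets_borel: "Q \<in> dyadic_lattice z \<Longrightarrow> Q \<in> sets borel"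
  by (elim dyadic_lattice_hcube) (simp add: hcube_in_sets_borel)

definition dyadic_level :: "(real^'n) set \<Rightarrow> nat" where
  "dyadic_level Q = (SOME k. side_len Q = 2 powr - real k)"

lemma side_len_dyadic_lattice:
  assumes "Q \<in> dyadic_lattice z"
  shows "side_len Q = 2 powr - real (dyadic_level Q)"
proof -
  obtain k j where "Q = hcube (z + (2 powr - real k) *\<^sub>R (\<chi> i. real_of_int (j $ i))) (2 powr - real k)"
    using assms by (rule dyadic_latticeE)
  then have "side_len Q = 2 powr - real k"
    by (simp add: side_len_hcube)
  then show ?thesis
    unfolding dyadic_level_def by (rule someI)
qed

lemma dyadic_index_eq_floor:
  assumes "0 < s" and "x \<in> hcube (z + s *\<^sub>R (\<chi> i. real_of_int (j $ i))) s"
  shows "j $ d = \<lfloor>(x $ d - z $ d) / s\<rfloor>"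
proof -
  have "z $ d + s * j $ d \<le> x $ d" "x $ d < z $ d + s * j $ d + s"
    using assms(2) by (auto simp: hcube_def)
  then show ?thesis
    using assms(1) by (intro floor_unique[symmetric]) (simp_all add: field_simps)
qed

lemma dyadic_lattice_eq_if_level_eq:
  assumes "Q \<in> dyadic_lattice z" "Q' \<in> dyadic_lattice z"
    and "dyadic_level Q = dyadic_level Q'" and "x \<in> Q" "x \<in> Q'"
  shows "Q = Q'"
proof -
  obtain k j where Q: "Q = hcube (z + (2 powr - real k) *\<^sub>R (\<chi> i. real_of_int (j $ i))) (2 powr - real k)"
    using assms(1) by (rule dyadic_latticeE)
  obtain k' j' where Q': "Q' = hcube (z + (2 powr - real k') *\<^sub>R (\<chi> i. real_of_int (j' $ i))) (2 powr - real k')"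
    using assms(2) by (rule dyadic_latticeE)
  have "side_len Q = 2 powr - real k" "side_len Q' = 2 powr - real k'"
    using Q Q' by (simp_all add: side_len_hcube)
  moreover have "side_len Q = side_len Q'"
    using assms(1-3) by (simp add: side_len_dyadic_lattice)
  ultimately have "k' = k"
    by (simp add: powr_inj)
  moreover have "j $ i = j' $ i" for i
    using dyadic_index_eq_floor[of "2 powr - real k" x z j i] dyadic_index_eq_floor[of "2 powr - real k" x z j' i]
      assms(4,5) Q Q' \<open>k' = k\<close> by simp
  then have "j = j'"
    by (simp add: vec_eq_iff)
  ultimately show ?thesis
    using Q Q' by simp
qed

lemma dyadic_childrenE:
  assumes "C \<in> dyadic_children R"
  obtains c l e where "0 < l" "R = hcube c l" "\<forall>i. e $ i \<in> {0, 1}" "C = hcube (c + (l/2) *\<^sub>R e) (l/2)"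
  using assms unfolding dyadic_children_def by blast

lemma dyadic_child_subset:
  assumes "C \<in> dyadic_children R"
  shows "C \<subseteq> R"
proof
  obtain c l e where "0 < l" "R = hcube c l" "\<forall>i. e $ i \<in> {0, 1}" "C = hcube (c + (l/2) *\<^sub>R e) (l/2)"
    using assms by (rule dyadic_childrenE)
  fix x assume "x \<in> C"
  have "c $ i \<le> x $ i \<and> x $ i < c $ i + l" for i
  proof -
    have "c $ i + l/2 * e $ i \<le> x $ i" "x $ i < c $ i + l/2 * e $ i + l/2"
      using \<open>x \<in> C\<close> \<open>C = hcube (c + (l/2) *\<^sub>R e) (l/2)\<close> by (auto simp: hcube_def)
    moreover have "e $ i = 0 \<or> e $ i = 1"
      using \<open>\<forall>i. e $ i \<in> {0, 1}\<close> by auto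
    ultimately show ?thesis
      using \<open>0 < l\<close> by auto
  qed
  then show "x \<in> R"
    using \<open>R = hcube c l\<close> by (simp add: hcube_def)
qed

lemma dyadic_child_hcube:
  assumes "C \<in> dyadic_children R"
  obtains c l where "0 < l" "C = hcube c l"
  using assms by (elim dyadic_childrenE) (erule that[rotated], simp)

lemma side_len_dyadic_child:
  assumes "C \<in> dyadic_children R"
  shows "side_len C = side_len R / 2"
  using assms by (elim dyadic_childrenE) (simp add: side_len_hcube)

lemma dyadic_level_less_if_subset_child:
  assumes "Q \<in> dyadic_lattice z1" "R \<in> dyadic_lattice z2"
    and "C \<in> dyadic_children R" "Q \<subseteq> C"
  shows "dyadic_level R < dyadic_level Q"
proof -
  obtain c l where "0 < l" "Q = hcube c l"
    using assms(1) by (rule dyadic_lattice_hcube)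
  moreover obtain c' l' where "0 < l'" "C = hcube c' l'"
    using assms(3) by (rule dyadic_child_hcube)
  ultimately have "side_len Q \<le> side_len C"
    using assms(4) by (simp add: side_len_hcube hcube_side_le_if_subset)
  then have "(2::real) powr - real (dyadic_level Q) \<le> 2 powr - real (dyadic_level R) / 2"
    using assms(1-3) by (simp add: side_len_dyadic_lattice side_len_dyadic_child)
  also have "\<dots> = 2 powr - real (dyadic_level R + 1)"
    by (simp add: powr_diff powr_minus divide_simps)
  finally show ?thesis
    by simp
qed

lemma side_len_ratio_powr:
  assumes "Q \<in> dyadic_lattice z1" "R \<in> dyadic_lattice z2"
    and "dyadic_level R \<le> dyadic_level Q"
  shows "(side_len Q / side_len R) powr s = (2 powr - s) ^ (dyadic_level Q - dyadic_level R)"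
proof -
  have "side_len Q / side_len R = 2 powr - real (dyadic_level Q - dyadic_level R)"
    using assms by (simp add: side_len_dyadic_lattice powr_diff[symmetric] of_nat_diff)
  then show ?thesis
    by (simp add: powr_powr powr_realpow[symmetric] mult.commute)
qed

lemma Cauchy_Schwarz_sum_sqrt:
  fixes f g :: "'a \<Rightarrow> real"
  shows "(\<Sum>i\<in>I. f i * g i) \<le> sqrt (\<Sum>i\<in>I. (f i)\<^sup>2) * sqrt (\<Sum>i\<in>I. (g i)\<^sup>2)"
  unfolding real_sqrt_mult[symmetric] by (rule real_le_rsqrt, rule Cauchy_Schwarz_ineq_sum)

lemma sum_prod_by_rows:
  assumes "finite S"
  shows "(\<Sum>(x, y)\<in>S. f x y) = (\<Sum>x\<in>fst ` S. \<Sum>y\<in>{y. (x, y) \<in> S}. f x y)"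
proof -
  have Sigma_rows: "Sigma (fst ` S) (\<lambda>x. {y. (x, y) \<in> S}) = S"
    by force
  have "finite {y. (x, y) \<in> S}" for x
    using finite_Image[OF assms, of "{x}"] by (simp add: Image_singleton)
  then have "(\<Sum>x\<in>fst ` S. \<Sum>y\<in>{y. (x, y) \<in> S}. f x y) = (\<Sum>(x, y)\<in>Sigma (fst ` S) (\<lambda>x. {y. (x, y) \<in> S}). f x y)"
    using assms by (intro sum.Sigma) auto
  then show ?thesis
    unfolding Sigma_rows by simp
qed

lemma sum_prod_by_columns:
  assumes "finite S"
  shows "(\<Sum>(x, y)\<in>S. f x y) = (\<Sum>y\<in>snd ` S. \<Sum>x\<in>{x. (x, y) \<in> S}. f x y)"
proof -
  have "(\<Sum>(x, y)\<in>S. f x y) = (\<Sum>(y, x)\<in>prod.swap ` S. f x y)"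
    by (simp add: sum.reindex case_prod_beta)
  also have "\<dots> = (\<Sum>y\<in>snd ` S. \<Sum>x\<in>{x. (x, y) \<in> S}. f x y)"
    using assms by (subst sum_prod_by_rows) (auto simp: image_image)
  finally show ?thesis .
qed

lemma Schur_test_sum:
  fixes w m :: "'a \<Rightarrow> 'b \<Rightarrow> real"
  assumes "finite S"
    and nonneg: "\<And>x y. (x, y) \<in> S \<Longrightarrow> 0 \<le> w x y \<and> 0 \<le> m x y"
    and rows: "\<And>x. x \<in> fst ` S \<Longrightarrow> (\<Sum>y\<in>{y. (x, y) \<in> S}. w x y) \<le> C"
    and columns: "\<And>y. y \<in> snd ` S \<Longrightarrow> (\<Sum>x\<in>{x. (x, y) \<in> S}. w x y * m x y) \<le> C"
  shows "(\<Sum>(x, y)\<in>S. w x y * sqrt (m x y) * a x * b y)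
           \<le> C * sqrt (\<Sum>x\<in>fst ` S. (a x)\<^sup>2) * sqrt (\<Sum>y\<in>snd ` S. (b y)\<^sup>2)"
proof (cases "S = {}")
  case False
  then obtain x0 where "x0 \<in> fst ` S" by blast
  have "0 \<le> (\<Sum>y\<in>{y. (x0, y) \<in> S}. w x0 y)"
    using nonneg by (intro sum_nonneg) auto
  then have "0 \<le> C"
    using rows[OF \<open>x0 \<in> fst ` S\<close>] by linarith
  have row_bound: "(\<Sum>(x, y)\<in>S. w x y * (a x)\<^sup>2) \<le> C * (\<Sum>x\<in>fst ` S. (a x)\<^sup>2)"
  proof -
    have "(\<Sum>(x, y)\<in>S. w x y * (a x)\<^sup>2) = (\<Sum>x\<in>fst ` S. (\<Sum>y\<in>{y. (x, y) \<in> S}. w x y) * (a x)\<^sup>2)"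
      using \<open>finite S\<close> by (simp add: sum_prod_by_rows sum_distrib_right)
    also have "\<dots> \<le> (\<Sum>x\<in>fst ` S. C * (a x)\<^sup>2)"
      by (intro sum_mono mult_right_mono rows) auto
    finally show ?thesis by (simp add: sum_distrib_left)
  qed
  have column_bound: "(\<Sum>(x, y)\<in>S. w x y * m x y * (b y)\<^sup>2) \<le> C * (\<Sum>y\<in>snd ` S. (b y)\<^sup>2)"
  proof -
    have "(\<Sum>(x, y)\<in>S. w x y * m x y * (b y)\<^sup>2)
            = (\<Sum>y\<in>snd ` S. (\<Sum>x\<in>{x. (x, y) \<in> S}. w x y * m x y) * (b y)\<^sup>2)"
      using \<open>finite S\<close> by (simp add: sum_prod_by_columns sum_distrib_right)
    also have "\<dots> \<le> (\<Sum>y\<in>snd ` S. C * (b y)\<^sup>2)"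
      by (intro sum_mono mult_right_mono columns) auto
    finally show ?thesis by (simp add: sum_distrib_left)
  qed
  have "(\<Sum>(x, y)\<in>S. w x y * sqrt (m x y) * a x * b y)
          = (\<Sum>p\<in>S. (sqrt (w (fst p) (snd p)) * a (fst p)) * (sqrt (w (fst p) (snd p) * m (fst p) (snd p)) * b (snd p)))"
    using nonneg by (intro sum.cong) (auto simp: real_sqrt_mult)
  also have "\<dots> \<le> sqrt (\<Sum>p\<in>S. (sqrt (w (fst p) (snd p)) * a (fst p))\<^sup>2)
                  * sqrt (\<Sum>p\<in>S. (sqrt (w (fst p) (snd p) * m (fst p) (snd p)) * b (snd p))\<^sup>2)"
    by (rule Cauchy_Schwarz_sum_sqrt)
  also have "\<dots> = sqrt (\<Sum>(x, y)\<in>S. w x y * (a x)\<^sup>2) * sqrt (\<Sum>(x, y)\<in>S. w x y * m x y * (b y)\<^sup>2)"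
    using nonneg by (intro arg_cong2[where f = "\<lambda>u v. sqrt u * sqrt v"] sum.cong) (auto simp: power_mult_distrib)
  also have "\<dots> \<le> sqrt (C * (\<Sum>x\<in>fst ` S. (a x)\<^sup>2)) * sqrt (C * (\<Sum>y\<in>snd ` S. (b y)\<^sup>2))"
    using row_bound column_bound \<open>0 \<le> C\<close> nonneg
    by (intro mult_mono real_sqrt_le_mono) (auto intro!: sum_nonneg mult_nonneg_nonneg)
  also have "\<dots> = C * sqrt (\<Sum>x\<in>fst ` S. (a x)\<^sup>2) * sqrt (\<Sum>y\<in>snd ` S. (b y)\<^sup>2)"
    using \<open>0 \<le> C\<close> by (simp add: real_sqrt_mult)
  finally show ?thesis .
qed simp

lemma ennreal_sqrt_le_ennsqrt:
  assumes "ennreal x \<le> X"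
  shows "ennreal (sqrt x) \<le> ennsqrt X"
proof (cases "X = \<infinity>")
  case False
  then have "x \<le> enn2real X"
    using assms by (cases X) (auto simp: ennreal_le_iff2)
  then show ?thesis
    using False by (simp add: ennsqrt_def ennreal_leI)
qed (simp add: ennsqrt_def)

lemma sqrt_sum_le_ennsqrt_infsum:
  fixes f :: "'a \<Rightarrow> real"
  assumes "finite A'" "A' \<subseteq> A"
  shows "ennreal (sqrt (\<Sum>x\<in>A'. (f x)\<^sup>2)) \<le> ennsqrt (\<Sum>\<^sub>\<infinity>x\<in>A. ennreal ((f x)\<^sup>2))"
proof (rule ennreal_sqrt_le_ennsqrt)
  have "ennreal (\<Sum>x\<in>A'. (f x)\<^sup>2) = (\<Sum>\<^sub>\<infinity>x\<in>A'. ennreal ((f x)\<^sup>2))"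
    using assms(1) by (simp add: sum_ennreal)
  also have "\<dots> \<le> (\<Sum>\<^sub>\<infinity>x\<in>A. ennreal ((f x)\<^sup>2))"
    using assms(2) by (intro infsum_mono_neutral nonneg_summable_on_complete) auto
  finally show "ennreal (\<Sum>x\<in>A'. (f x)\<^sup>2) \<le> (\<Sum>\<^sub>\<infinity>x\<in>A. ennreal ((f x)\<^sup>2))" .
qed

lemma Schur_test_infsum:
  fixes w m :: "'a \<Rightarrow> 'b \<Rightarrow> real"
  assumes "P \<subseteq> A \<times> B"
    and a_nonneg: "\<And>x. x \<in> A \<Longrightarrow> 0 \<le> a x" and b_nonneg: "\<And>y. y \<in> B \<Longrightarrow> 0 \<le> b y"
    and nonneg: "\<And>x y. (x, y) \<in> P \<Longrightarrow> 0 \<le> w x y \<and> 0 \<le> m x y"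
    and rows: "\<And>x Y. x \<in> A \<Longrightarrow> finite Y \<Longrightarrow> Y \<subseteq> {y. (x, y) \<in> P} \<Longrightarrow> (\<Sum>y\<in>Y. w x y) \<le> C"
    and columns: "\<And>y X. y \<in> B \<Longrightarrow> finite X \<Longrightarrow> X \<subseteq> {x. (x, y) \<in> P}
                    \<Longrightarrow> (\<Sum>x\<in>X. w x y * m x y) \<le> C"
  shows "(\<Sum>\<^sub>\<infinity>(x, y)\<in>P. ennreal (w x y * sqrt (m x y) * a x * b y))
           \<le> ennreal C * ennsqrt (\<Sum>\<^sub>\<infinity>x\<in>A. ennreal ((a x)\<^sup>2)) * ennsqrt (\<Sum>\<^sub>\<infinity>y\<in>B. ennreal ((b y)\<^sup>2))"
proof (rule infsum_le_finite_sums)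
  show "(\<lambda>(x, y). ennreal (w x y * sqrt (m x y) * a x * b y)) summable_on P"
    by (rule nonneg_summable_on_complete) auto
next
  fix F assume "finite F" "F \<subseteq> P"
  then have "fst ` F \<subseteq> A" "snd ` F \<subseteq> B" "finite (fst ` F)" "finite (snd ` F)"
    using assms(1) by auto
  have "0 \<le> w x y * sqrt (m x y) * a x * b y" if "(x, y) \<in> F" for x y
  proof -
    have "(x, y) \<in> P" "x \<in> A" "y \<in> B"
      using that \<open>F \<subseteq> P\<close> assms(1) by auto
    then show ?thesis
      using nonneg a_nonneg b_nonneg by simp
  qed
  then have "(\<Sum>(x, y)\<in>F. ennreal (w x y * sqrt (m x y) * a x * b y))
               = ennreal (\<Sum>(x, y)\<in>F. w x y * sqrt (m x y) * a x * b y)"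
    by (subst sum_ennreal[symmetric]) (auto simp: case_prod_unfold)
  also have "\<dots> \<le> ennreal (C * sqrt (\<Sum>x\<in>fst ` F. (a x)\<^sup>2) * sqrt (\<Sum>y\<in>snd ` F. (b y)\<^sup>2))"
  proof (rule ennreal_leI, rule Schur_test_sum)
    show "(\<Sum>y\<in>{y. (x, y) \<in> F}. w x y) \<le> C" if "x \<in> fst ` F" for x
      using that \<open>fst ` F \<subseteq> A\<close> \<open>F \<subseteq> P\<close> finite_Image[OF \<open>finite F\<close>, of "{x}"]
      by (intro rows) (auto simp: Image_singleton)
    show "(\<Sum>x\<in>{x. (x, y) \<in> F}. w x y * m x y) \<le> C" if "y \<in> snd ` F" for y
      using that \<open>snd ` F \<subseteq> B\<close> \<open>F \<subseteq> P\<close> \<open>finite F\<close> finite_Image[of "converse F" "{y}"]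
      by (intro columns) (auto simp: Image_singleton)
  qed (use \<open>finite F\<close> \<open>F \<subseteq> P\<close> nonneg in auto)
  also have "\<dots> = ennreal C * ennreal (sqrt (\<Sum>x\<in>fst ` F. (a x)\<^sup>2)) * ennreal (sqrt (\<Sum>y\<in>snd ` F. (b y)\<^sup>2))"
    by (simp add: ennreal_mult'' sum_nonneg)
  also have "\<dots> \<le> ennreal C * ennsqrt (\<Sum>\<^sub>\<infinity>x\<in>A. ennreal ((a x)\<^sup>2)) * ennsqrt (\<Sum>\<^sub>\<infinity>y\<in>B. ennreal ((b y)\<^sup>2))"
    using \<open>fst ` F \<subseteq> A\<close> \<open>snd ` F \<subseteq> B\<close> \<open>finite (fst ` F)\<close> \<open>finite (snd ` F)\<close>
    by (intro mult_mono sqrt_sum_le_ennsqrt_infsum) auto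
  finally show "(\<Sum>(x, y)\<in>F. ennreal (w x y * sqrt (m x y) * a x * b y))
      \<le> ennreal C * ennsqrt (\<Sum>\<^sub>\<infinity>x\<in>A. ennreal ((a x)\<^sup>2)) * ennsqrt (\<Sum>\<^sub>\<infinity>y\<in>B. ennreal ((b y)\<^sup>2))" .
qed

lemma sum_power_le_geometric:
  fixes r :: real
  assumes "0 \<le> r" "r < 1" "finite K"
  shows "(\<Sum>i\<in>K. r ^ i) \<le> 1 / (1 - r)"
proof -
  have "norm r < 1"
    using assms(1,2) by simp
  then have "(\<Sum>i\<in>K. r ^ i) \<le> (\<Sum>i. r ^ i)"
    using assms(1,3) by (intro sum_le_suminf summable_geometric) auto
  then show ?thesis
    using suminf_geometric[OF \<open>norm r < 1\<close>] by simp
qed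

lemma sum_measure_le_if_disjoint_subsets:
  assumes "finite_measure M" "finite S" "S \<subseteq> sets M" "disjoint_family_on (\<lambda>Q. Q) S"
    and "E \<in> sets M" "\<And>Q. Q \<in> S \<Longrightarrow> Q \<subseteq> E"
  shows "(\<Sum>Q\<in>S. measure M Q) \<le> measure M E"
proof -
  have "(\<Sum>Q\<in>S. measure M Q) = measure M (\<Union>S)"
    using finite_measure.finite_measure_finite_Union[OF assms(1-2) _ assms(4)] assms(3) by simp
  also have "\<dots> \<le> measure M E"
    using assms(1,5,6) by (intro finite_measure.finite_measure_mono) auto
  finally show ?thesis .
qed

lemma sum_side_ratio_over_ancestors_le:
  fixes Q :: "(real^'n) set"
  assumes "Q \<in> dyadic_lattice z1" "finite Y" "Y \<subseteq> dyadic_lattice z2"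
    and children: "\<And>R. R \<in> Y \<Longrightarrow> \<exists>C \<in> dyadic_children R. Q \<subseteq> C" and "0 < s"
  shows "(\<Sum>R\<in>Y. (side_len Q / side_len R) powr s) \<le> 1 / (1 - 2 powr - s)"
proof -
  define depth where "depth R = dyadic_level Q - dyadic_level R" for R :: "(real^'n) set"
  have level_less: "dyadic_level R < dyadic_level Q" if "R \<in> Y" for R
    using children[OF that] assms(1,3) that by (blast intro: dyadic_level_less_if_subset_child)
  obtain x where "x \<in> Q"
    using dyadic_lattice_nonempty[OF assms(1)] by blast
  have "inj_on depth Y"
  proof (rule inj_onI)
    fix R R' assume "R \<in> Y" "R' \<in> Y" "depth R = depth R'"
    then have "dyadic_level R = dyadic_level R'"
      using level_less unfolding depth_def by fastforce
    moreover have "x \<in> R" "x \<in> R'"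
      using children \<open>R \<in> Y\<close> \<open>R' \<in> Y\<close> \<open>x \<in> Q\<close> dyadic_child_subset by blast+
    ultimately show "R = R'"
      using dyadic_lattice_eq_if_level_eq \<open>R \<in> Y\<close> \<open>R' \<in> Y\<close> assms(3) by blast
  qed
  have "(\<Sum>R\<in>Y. (side_len Q / side_len R) powr s) = (\<Sum>R\<in>Y. (2 powr - s) ^ depth R)"
    using assms(1,3) level_less unfolding depth_def
    by (intro sum.cong) (auto intro: side_len_ratio_powr less_imp_le)
  also have "\<dots> = (\<Sum>i\<in>depth ` Y. (2 powr - s) ^ i)"
    using \<open>inj_on depth Y\<close> by (simp add: sum.reindex)
  also have "\<dots> \<le> 1 / (1 - 2 powr - s)"
    using assms(2,5) by (intro sum_power_le_geometric) (auto intro: powr_less_one)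
  finally show ?thesis .
qed

lemma sum_side_ratio_measure_over_descendants_le:
  fixes R :: "(real^'n) set"
  assumes M: "finite_measure M" "sets M = sets borel"
    and "R \<in> dyadic_lattice z2" "C \<in> dyadic_children R"
    and "finite X" "X \<subseteq> dyadic_lattice z1" "\<And>Q. Q \<in> X \<Longrightarrow> Q \<subseteq> C" and "0 < s"
  shows "(\<Sum>Q\<in>X. (side_len Q / side_len R) powr s * (measure M Q / measure M C)) \<le> 1 / (1 - 2 powr - s)"
proof -
  define depth where "depth Q = dyadic_level Q - dyadic_level R" for Q :: "(real^'n) set"
  have level_less: "dyadic_level R < dyadic_level Q" if "Q \<in> X" for Q
    using assms(3,4,6,7) that by (blast intro: dyadic_level_less_if_subset_child)
  have "X \<subseteq> sets M"
    using assms(6) M(2) dyadic_lattice_in_sets_borel by blast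
  have "C \<in> sets M"
    using assms(4) M(2) by (elim dyadic_child_hcube) (simp add: hcube_in_sets_borel)
  have layer: "(\<Sum>Q\<in>{Q \<in> X. depth Q = i}. (2 powr - s) ^ i * (measure M Q / measure M C)) \<le> (2 powr - s) ^ i"
    for i
  proof -
    let ?L = "{Q \<in> X. depth Q = i}"
    have "disjoint_family_on (\<lambda>Q. Q) ?L"
      unfolding disjoint_family_on_def
    proof (intro ballI impI)
      fix Q Q' assume "Q \<in> ?L" "Q' \<in> ?L" "Q \<noteq> Q'"
      then have "dyadic_level Q = dyadic_level Q'"
        using level_less unfolding depth_def by fastforce
      then show "Q \<inter> Q' = {}"
        using dyadic_lattice_eq_if_level_eq \<open>Q \<in> ?L\<close> \<open>Q' \<in> ?L\<close> \<open>Q \<noteq> Q'\<close> assms(6) by blast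
    qed
    then have "(\<Sum>Q\<in>?L. measure M Q) \<le> measure M C"
      using assms(5,7) M(1) \<open>X \<subseteq> sets M\<close> \<open>C \<in> sets M\<close>
      by (intro sum_measure_le_if_disjoint_subsets) auto
    \<comment> \<open>if \<open>measure M C = 0\<close>, every quotient is \<open>0\<close> since \<open>x / 0 = 0\<close>\<close>
    then have "(\<Sum>Q\<in>?L. measure M Q / measure M C) \<le> 1"
      by (cases "measure M C = 0") (auto simp: sum_divide_distrib[symmetric] divide_le_eq_1 less_le)
    from mult_left_mono[OF this, of "(2 powr - s) ^ i"] show ?thesis
      by (simp add: sum_distrib_left)
  qed
  have "(\<Sum>Q\<in>X. (side_len Q / side_len R) powr s * (measure M Q / measure M C))
          = (\<Sum>Q\<in>X. (2 powr - s) ^ depth Q * (measure M Q / measure M C))"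
    using assms(3,6) level_less unfolding depth_def
    by (intro sum.cong) (auto simp: side_len_ratio_powr less_imp_le)
  also have "\<dots> = (\<Sum>i\<in>depth ` X. \<Sum>Q\<in>{Q \<in> X. depth Q = i}. (2 powr - s) ^ depth Q * (measure M Q / measure M C))"
    by (rule sum.group[symmetric]) (use assms(5) in auto)
  also have "\<dots> = (\<Sum>i\<in>depth ` X. \<Sum>Q\<in>{Q \<in> X. depth Q = i}. (2 powr - s) ^ i * (measure M Q / measure M C))"
    by (intro sum.cong) auto
  also have "\<dots> \<le> (\<Sum>i\<in>depth ` X. (2 powr - s) ^ i)"
    by (intro sum_mono layer)
  also have "\<dots> \<le> 1 / (1 - 2 powr - s)"
    using assms(5,8) by (intro sum_power_le_geometric) (auto intro: powr_less_one)
  finally show ?thesis .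
qed

lemma transit_cubes_subset: "transit_cubes \<mu> H D \<subseteq> D"
  by (auto simp: transit_cubes_def)

theorem lemma24:
  fixes \<mu> :: "(real^'n) measure" and H :: "(real^'n) set" and \<tau> :: real
    and z1 z2 :: "real^'n" and child :: "(real^'n) set \<Rightarrow> (real^'n) set"
    and a b :: "(real^'n) set \<Rightarrow> real"
  assumes "finite_measure \<mu>" and "sets \<mu> = sets borel"
    and "open H"
    and "0 < \<tau>" and "\<tau> \<le> 1"
    and "\<And>R. R \<in> dyadic_lattice z2 \<Longrightarrow> child R \<in> dyadic_children R"
    and "\<And>Q. Q \<in> transit_cubes \<mu> H (dyadic_lattice z1) \<Longrightarrow> 0 \<le> a Q"
    and "\<And>R. R \<in> transit_cubes \<mu> H (dyadic_lattice z2) \<Longrightarrow> 0 \<le> b R"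
  shows "(\<Sum>\<^sub>\<infinity>(Q,R)\<in>{(Q,R). Q \<in> transit_cubes \<mu> H (dyadic_lattice z1)
                 \<and> R \<in> transit_cubes \<mu> H (dyadic_lattice z2) \<and> Q \<subseteq> child R}.
            ennreal ((side_len Q / side_len R) powr (\<tau>/2) * sqrt (measure \<mu> Q / measure \<mu> (child R))
                     * a Q * b R))
         \<le> ennreal (1 / (1 - 2 powr (-\<tau>/2)))
            * ennsqrt (\<Sum>\<^sub>\<infinity>Q\<in>transit_cubes \<mu> H (dyadic_lattice z1). ennreal ((a Q)\<^sup>2))
            * ennsqrt (\<Sum>\<^sub>\<infinity>R\<in>transit_cubes \<mu> H (dyadic_lattice z2). ennreal ((b R)\<^sup>2))"
  unfolding minus_divide_left[symmetric]
proof (rule Schur_test_infsum)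
  let ?D1 = "transit_cubes \<mu> H (dyadic_lattice z1)" and ?D2 = "transit_cubes \<mu> H (dyadic_lattice z2)"
  let ?P = "{(Q, R). Q \<in> ?D1 \<and> R \<in> ?D2 \<and> Q \<subseteq> child R}"
  have "0 < \<tau> / 2"
    using assms(4) by simp
  have lattices: "?D1 \<subseteq> dyadic_lattice z1" "?D2 \<subseteq> dyadic_lattice z2"
    by (rule transit_cubes_subset)+
  show "(\<Sum>R\<in>Y. (side_len Q / side_len R) powr (\<tau>/2)) \<le> 1 / (1 - 2 powr - (\<tau>/2))"
    if "Q \<in> ?D1" "finite Y" "Y \<subseteq> {R. (Q, R) \<in> ?P}" for Q Y
    using that lattices assms(6) \<open>0 < \<tau> / 2\<close> by (intro sum_side_ratio_over_ancestors_le) blast+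
  show "(\<Sum>Q\<in>X. (side_len Q / side_len R) powr (\<tau>/2) * (measure \<mu> Q / measure \<mu> (child R)))
          \<le> 1 / (1 - 2 powr - (\<tau>/2))"
    if "R \<in> ?D2" "finite X" "X \<subseteq> {Q. (Q, R) \<in> ?P}" for R X
    using that lattices assms(1,2,6) \<open>0 < \<tau> / 2\<close>
    by (intro sum_side_ratio_measure_over_descendants_le) auto
qed (use assms(7,8) in auto)

end
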